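(* Let $\Delta$ be a simplicial polytopal fan in $\mathbb{R}^d$ with ray generators $\mathbf{v}_1,\ldots,\mathbf{v}_n$. Let $\mathbf{u}^{(1)},\mathbf{u}^{(2)},\ldots\in\mathbb{S}^{d-1}$ be a sequence of directions for which there exist $0\le t<1/2$, $\delta>0$ and $N\in\mathbb{N}$ such that \[ |\{\mathbf{u}^{(1)},\ldots,\mathbf{u}^{(m)}\}\cap C_t(i)|\ge m(2.5nt+\delta) \] for all $m\ge N$ and all $1\le i\le n$. Then, with $U=(\mathbf{u}^{(1)},\ldots,\mathbf{u}^{(m)})^\mathsf{T}$, \[ \lambda_1(A_U^\mathsf{T}A_U)\ge\frac{m\delta}{\max_{1\le i\le n}\|\mathbf{v}_i\|^2} \] for all $m\ge N$.
   Context: A fan is simplicial if every cone is generated by linearly independent vectors; polytopal if it is the normal fan of a polytope. For $\mathbf{u}\in\mathbb{R}^d$, with $\sigma$ the cone of $\Delta$ containing $\mathbf{u}$ in its relative interior and $\mathbf{u}=\sum_{k\in I_\sigma}\lambda_k\mathbf{v}_k$ over the generators of $\sigma$, set $[\mathbf{u}]_i=\lambda_i$ for $i\in I_\sigma$ and $0$ otherwise; $A_U$ is the $m\times n$ matrix with rows $[\mathbf{u}^{(i)}]^\mathsf{T}$. $W$ is the $n\times n$ diagonal matrix with diagonal entries $\|\mathbf{v}_1\|,\ldots,\|\mathbf{v}_n\|$, and $C_t(j)=\{\mathbf{x}\in\mathbb{R}^d\colon\|[\mathbf{x}]^\mathsf{T}W-\mathbf{e}_j\|_\infty\le t\}$.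 $\lambda_1(A)$ denotes the smallest eigenvalue of a symmetric matrix $A$. *)

theory Defs
  imports "HOL-Analysis.Analysis"
begin

definition pos_hull :: "'a::real_vector set \<Rightarrow> 'a set" where
  "pos_hull S = {(\<Sum>x\<in>S. c x *\<^sub>R x) | c. \<forall>x\<in>S. c x \<ge> 0}"

definition normal_cone :: "'a::real_inner set \<Rightarrow> 'a set \<Rightarrow> 'a set" where
  "normal_cone P F = {u. \<forall>x\<in>F. \<forall>y\<in>P. inner u y \<le> inner u x}"

definition normal_fan :: "'a::real_inner set \<Rightarrow> 'a set set" where
  "normal_fan P = {normal_cone P F | F. F face_of P \<and> F \<noteq> {}}"

definition polytopal_fan :: "'a::euclidean_space set set \<Rightarrow> bool" where
  "polytopal_fan \<Delta> \<longleftrightarrow> (\<exists>P. polytope P \<and> \<Delta> = normal_fan P)"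

definition simplicial_fan :: "'a::euclidean_space set set \<Rightarrow> bool" where
  "simplicial_fan \<Delta> \<longleftrightarrow>
     (\<forall>\<sigma>\<in>\<Delta>. \<exists>S. finite S \<and> independent S \<and> \<sigma> = pos_hull S)"

definition ray_generators :: "'a::euclidean_space set set \<Rightarrow> ('n \<Rightarrow> 'a) \<Rightarrow> bool" where
  "ray_generators \<Delta> v \<longleftrightarrow>
     (\<forall>i. v i \<noteq> 0 \<and> pos_hull {v i} \<in> \<Delta>) \<and>
     inj (\<lambda>i. pos_hull {v i}) \<and>
     (\<forall>\<sigma>\<in>\<Delta>. dim \<sigma> = 1 \<longrightarrow> (\<exists>i. \<sigma> = pos_hull {v i}))"

definition carrier_cone :: "'a::euclidean_space set set \<Rightarrow> 'a \<Rightarrow> 'a set" where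
  "carrier_cone \<Delta> u = (THE \<sigma>. \<sigma> \<in> \<Delta> \<and> u \<in> rel_interior \<sigma>)"

definition fan_coords ::
  "'a::euclidean_space set set \<Rightarrow> ('n::finite \<Rightarrow> 'a) \<Rightarrow> 'a \<Rightarrow> real^'n" where
  "fan_coords \<Delta> v u =
     (let \<sigma> = carrier_cone \<Delta> u in
      THE c. (\<forall>i. v i \<notin> \<sigma> \<longrightarrow> c $ i = 0) \<and>
             u = (\<Sum>i\<in>{i. v i \<in> \<sigma>}. (c $ i) *\<^sub>R v i))"

text \<open>A_U^T A_U for U = (u^(1),\<dots>,u^(m))^T, where A_U is the m\<times>n matrix with rows [u^(k)]^T:
  its (i,j) entry is \<Sum>_{k=1..m} [u^(k)]_i [u^(k)]_j.\<close>
definition AtA_U ::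
  "'a::euclidean_space set set \<Rightarrow> ('n::finite \<Rightarrow> 'a) \<Rightarrow> (nat \<Rightarrow> 'a) \<Rightarrow> nat \<Rightarrow> real^'n^'n" where
  "AtA_U \<Delta> v u m =
     (\<chi> i j. \<Sum>k\<in>{1..m}. (fan_coords \<Delta> v (u k)) $ i * (fan_coords \<Delta> v (u k)) $ j)"

definition C_set ::
  "'a::euclidean_space set set \<Rightarrow> ('n::finite \<Rightarrow> 'a) \<Rightarrow> real \<Rightarrow> 'n \<Rightarrow> 'a set" where
  "C_set \<Delta> v t j =
     {x. (MAX i\<in>UNIV. \<bar>(fan_coords \<Delta> v x) $ i * norm (v i) - (if i = j then 1 else 0)\<bar>) \<le> t}"

definition lambda_min :: "real^'n^'n \<Rightarrow> real" where
  "lambda_min M = Min {e. \<exists>x. x \<noteq> 0 \<and> M *v x = e *\<^sub>R x}"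

end

theory Submission
  imports Defs
begin

text \<open>Write \<open>z\<^sub>j = x\<^sub>j / \<parallel>v\<^sub>j\<parallel>\<close> and \<open>\<alpha> = 5/2 n t + \<delta>\<close>. If \<open>u \<in> C\<^sub>t(i)\<close>, then \<open>[u] \<bullet> x\<close> differs
  from \<open>z\<^sub>i\<close> by at most \<open>t \<parallel>z\<parallel>\<^sub>1\<close>, so \<open>([u] \<bullet> x)\<^sup>2 \<ge> z\<^sub>i\<^sup>2 - 2 t \<bar>z\<^sub>i\<bar> \<parallel>z\<parallel>\<^sub>1\<close>. For \<open>t < 1/2\<close> the sets
  \<open>C\<^sub>t(i)\<close> are pairwise disjoint and each contains at least \<open>m \<alpha>\<close> of the directions, so
  \<open>n \<alpha> \<le> 1\<close> and, summing the bound over the \<open>C\<^sub>t(i)\<close>,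
  \<open>x\<^sup>T A\<^sub>U\<^sup>T A\<^sub>U x \<ge> m \<alpha> (\<parallel>z\<parallel>\<^sup>2 - 2 t \<parallel>z\<parallel>\<^sub>1\<^sup>2) \<ge> m \<alpha> (1 - 2 n t) \<parallel>z\<parallel>\<^sup>2 \<ge> m \<delta> \<parallel>z\<parallel>\<^sup>2\<close>,
  the last step because \<open>\<alpha> (1 - 2 n t) - \<delta> = n t (5/2 - 2 \<alpha>) \<ge> 0\<close>. Since
  \<open>\<parallel>z\<parallel>\<^sup>2 \<ge> \<parallel>x\<parallel>\<^sup>2 / max\<^sub>i \<parallel>v\<^sub>i\<parallel>\<^sup>2\<close>, the Rayleigh quotient of \<open>A\<^sub>U\<^sup>T A\<^sub>U\<close> is bounded below as
  claimed. Only this property of the coordinate vectors \<open>[u]\<close> is used.\<close>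

lemma symmetric_matrix_inner_commute:
  fixes M :: "real^'n^'n"
  assumes "transpose M = M"
  shows "x \<bullet> (M *v y) = (M *v x) \<bullet> y"
  by (metis assms dot_lmul_matrix transpose_matrix_vector inner_commute)

lemma symmetric_matrix_eigenvalues_finite:
  fixes M :: "real^'n::finite^'n"
  assumes "transpose M = M"
  shows "finite {e. \<exists>x. x \<noteq> 0 \<and> M *v x = e *\<^sub>R x}" (is "finite ?E")
proof (rule ccontr)
  assume "infinite ?E"
  then obtain F where F: "finite F" "card F = Suc DIM(real^'n)" "F \<subseteq> ?E"
    using infinite_arbitrarily_large by blast
  have "\<forall>e\<in>F. \<exists>x. x \<noteq> 0 \<and> M *v x = e *\<^sub>R x" using F(3) by blast
  then obtain g where g: "\<And>e. e \<in> F \<Longrightarrow> g e \<noteq> 0 \<and> M *v g e = e *\<^sub>R g e"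
    by metis
  have orth: "g e \<bullet> g f = 0" if "e \<in> F" "f \<in> F" "e \<noteq> f" for e f
  proof -
    have "e * (g e \<bullet> g f) = (M *v g e) \<bullet> g f" using g[OF that(1)] by simp
    also have "\<dots> = g e \<bullet> (M *v g f)" using symmetric_matrix_inner_commute[OF assms] by simp
    also have "\<dots> = f * (g e \<bullet> g f)" using g[OF that(2)] by simp
    finally show ?thesis using that(3) by simp
  qed
  have "inj_on g F"
  proof (rule inj_onI)
    fix e f assume "e \<in> F" "f \<in> F" "g e = g f"
    then show "e = f" using orth[of e f] g[of e] by force
  qed
  moreover have "independent (g ` F)"
    by (rule pairwise_orthogonal_independent) (auto simp: pairwise_def orthogonal_def g intro: orth)
  ultimately have "card F \<le> DIM(real^'n)"
    using independent_bound[of "g ` F"] card_image[of g F] by simp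
  with F(2) show False by simp
qed

lemma psd_quadratic_form_zero_imp_kernel:
  fixes B :: "real^'n::finite^'n"
  assumes sym: "transpose B = B" and psd: "\<And>y. 0 \<le> y \<bullet> (B *v y)"
    and zero: "x \<bullet> (B *v x) = 0"
  shows "B *v x = 0"
proof -
  define w where "w = B *v x"
  define b where "b = w \<bullet> (B *v w)"
  have expand: "(x - s *\<^sub>R w) \<bullet> (B *v (x - s *\<^sub>R w)) = s * (s * b - 2 * (w \<bullet> w))" for s
    using zero symmetric_matrix_inner_commute[OF sym, of x w]
    by (simp add: w_def b_def matrix_vector_mult_diff_distrib matrix_vector_mult_scaleR
        inner_diff_left inner_diff_right inner_commute algebra_simps)
  \<comment> \<open>Moving from \<open>x\<close> along \<open>-w\<close> would make the form negative to first order.\<close>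
  have "w \<bullet> w \<le> 0"
  proof (rule ccontr)
    assume pos: "\<not> w \<bullet> w \<le> 0"
    define s where "s = (w \<bullet> w) / (b + 1)"
    have "b \<ge> 0" using psd by (simp add: b_def)
    with pos have "s > 0" "s * b < w \<bullet> w"
      by (auto simp: s_def field_simps)
    then have "s * (s * b - 2 * (w \<bullet> w)) < 0"
      using pos by (intro mult_pos_neg) auto
    with psd expand show False by (metis not_le)
  qed
  then have "w = 0" using inner_gt_zero_iff[of w] by linarith
  then show ?thesis by (simp add: w_def)
qed

lemma symmetric_matrix_has_eigenvector:
  fixes M :: "real^'n::finite^'n"
  assumes sym: "transpose M = M"
  shows "\<exists>e x. x \<noteq> 0 \<and> M *v x = e *\<^sub>R x"
proof -
  define q where "q x = x \<bullet> (M *v x)" for x :: "real^'n"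
  have "continuous_on (sphere 0 1) q"
    unfolding q_def by (intro continuous_intros linear_continuous_on matrix_vector_mul_linear)
  moreover have "sphere (0::real^'n) 1 \<noteq> {}"
    using norm_axis_1 by fastforce
  ultimately obtain x where x: "x \<in> sphere 0 1" and min: "\<And>y. y \<in> sphere 0 1 \<Longrightarrow> q x \<le> q y"
    using continuous_attains_inf[OF compact_sphere] by metis
  define B where "B = M - q x *\<^sub>R mat 1"
  have Bv: "B *v y = M *v y - q x *\<^sub>R y" for y
    by (simp add: B_def matrix_vector_mult_diff_rdistrib scaleR_matrix_vector_assoc[symmetric])
  have "transpose B = B"
    using sym by (simp add: B_def transpose_def vec_eq_iff mat_def)
  moreover have "0 \<le> y \<bullet> (B *v y)" for y
  proof (cases "y = 0")
    case False
    have "q x \<le> q (y /\<^sub>R norm y)" using False by (intro min) simp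
    then have "q x * (norm y)\<^sup>2 \<le> q y"
      using False by (simp add: q_def matrix_vector_mult_scaleR power2_eq_square field_simps)
    then show ?thesis by (simp add: Bv q_def inner_diff_right power2_norm_eq_inner)
  qed simp
  moreover have "x \<bullet> (B *v x) = 0"
    using x by (simp add: Bv q_def inner_diff_right power2_norm_eq_inner[symmetric])
  ultimately have "B *v x = 0" by (rule psd_quadratic_form_zero_imp_kernel)
  then have "M *v x = q x *\<^sub>R x" by (simp add: Bv)
  moreover have "x \<noteq> 0" using x by auto
  ultimately show ?thesis by blast
qed

lemma lambda_min_ge_Rayleigh:
  fixes M :: "real^'n::finite^'n"
  assumes sym: "transpose M = M" and bound: "\<And>x. b * (norm x)\<^sup>2 \<le> x \<bullet> (M *v x)"
  shows "b \<le> lambda_min M"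
proof -
  have "b \<le> e" if "x \<noteq> 0" "M *v x = e *\<^sub>R x" for e x
  proof -
    have "b * (norm x)\<^sup>2 \<le> e * (norm x)\<^sup>2"
      using bound[of x] that(2) by (simp add: power2_norm_eq_inner)
    with that(1) show ?thesis by simp
  qed
  then show ?thesis
    using symmetric_matrix_eigenvalues_finite[OF sym] symmetric_matrix_has_eigenvector[OF sym]
    by (auto simp: lambda_min_def Min_ge_iff)
qed

lemma inner_gram_matrix:
  fixes c :: "'k \<Rightarrow> real^'n::finite"
  shows "x \<bullet> ((\<chi> i j. \<Sum>k\<in>K. c k $ i * c k $ j) *v x) = (\<Sum>k\<in>K. (c k \<bullet> x)\<^sup>2)"
proof -
  have "x \<bullet> ((\<chi> i j. \<Sum>k\<in>K. c k $ i * c k $ j) *v x)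
      = (\<Sum>i\<in>UNIV. x $ i * (\<Sum>j\<in>UNIV. (\<Sum>k\<in>K. c k $ i * c k $ j) * x $ j))"
    by (simp add: inner_vec_def matrix_vector_mult_def)
  also have "\<dots> = (\<Sum>k\<in>K. (\<Sum>i\<in>UNIV. c k $ i * x $ i) * (\<Sum>j\<in>UNIV. c k $ j * x $ j))"
    by (simp add: sum_distrib_left sum_distrib_right sum.swap[of _ K] mult_ac)
  also have "\<dots> = (\<Sum>k\<in>K. (c k \<bullet> x)\<^sup>2)"
    by (simp add: inner_vec_def power2_eq_square)
  finally show ?thesis .
qed

definition weighted_axis_ball :: "('n \<Rightarrow> real) \<Rightarrow> real \<Rightarrow> 'n \<Rightarrow> (real^'n) set" where
  "weighted_axis_ball w t i = {c. \<forall>j. \<bar>c $ j * w j - (if j = i then 1 else 0)\<bar> \<le> t}"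

lemma C_set_eq_fan_coords_in_ball:
  "C_set \<Delta> v t i = {x. fan_coords \<Delta> v x \<in> weighted_axis_ball (\<lambda>j. norm (v j)) t i}"
  by (simp add: C_set_def weighted_axis_ball_def)

lemma weighted_axis_balls_disjoint:
  fixes w :: "'n::finite \<Rightarrow> real"
  assumes "t < 1/2" and "i \<noteq> j"
  shows "weighted_axis_ball w t i \<inter> weighted_axis_ball w t j = {}"
proof -
  have False if "\<bar>c $ i * w i - 1\<bar> \<le> t" "\<bar>c $ i * w i\<bar> \<le> t" for c :: "real^'n"
    using that assms(1) by linarith
  with assms(2) show ?thesis
    unfolding weighted_axis_ball_def by (fastforce dest: spec[of _ i])
qed

lemma sum_card_weighted_axis_balls_le:
  fixes w :: "'n::finite \<Rightarrow> real"
  assumes "t < 1/2" and "finite K"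
  shows "(\<Sum>i\<in>UNIV. card {k\<in>K. c k \<in> weighted_axis_ball w t i}) \<le> card K"
proof -
  have "(\<Sum>i\<in>UNIV. card {k\<in>K. c k \<in> weighted_axis_ball w t i})
      = card (\<Union>i. {k\<in>K. c k \<in> weighted_axis_ball w t i})"
    using weighted_axis_balls_disjoint[OF assms(1)] assms(2)
    by (intro card_UN_disjoint[symmetric]) auto
  also have "\<dots> \<le> card K"
    using assms(2) by (intro card_mono) auto
  finally show ?thesis .
qed

lemma inner_square_ge_near_axis:
  fixes c x :: "real^'n::finite"
  assumes "c \<in> weighted_axis_ball w t i" and "\<And>j. w j \<noteq> 0"
  shows "(x $ i / w i)\<^sup>2 - 2 * t * \<bar>x $ i / w i\<bar> * (\<Sum>j\<in>UNIV. \<bar>x $ j / w j\<bar>) \<le> (c \<bullet> x)\<^sup>2"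
proof -
  define z where "z j = x $ j / w j" for j
  define e where "e j = c $ j * w j - (if j = i then 1 else 0)" for j
  define b where "b = (\<Sum>j\<in>UNIV. e j * z j)"
  have "c \<bullet> x = (\<Sum>j\<in>UNIV. ((if j = i then 1 else 0) + e j) * z j)"
    using assms(2) by (simp add: inner_vec_def z_def e_def)
  also have "\<dots> = z i + b"
    by (simp add: b_def distrib_right sum.distrib if_distrib[of "\<lambda>a. a * _"] cong: if_cong)
  finally have cx: "c \<bullet> x = z i + b" .
  have "\<bar>b\<bar> \<le> (\<Sum>j\<in>UNIV. \<bar>e j\<bar> * \<bar>z j\<bar>)"
    unfolding b_def abs_mult[symmetric] by (rule sum_abs)
  also have "\<dots> \<le> (\<Sum>j\<in>UNIV. t * \<bar>z j\<bar>)"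
    using assms(1) by (intro sum_mono mult_right_mono) (auto simp: weighted_axis_ball_def e_def)
  finally have "\<bar>z i\<bar> * \<bar>b\<bar> \<le> \<bar>z i\<bar> * (t * (\<Sum>j\<in>UNIV. \<bar>z j\<bar>))"
    by (simp add: mult_left_mono flip: sum_distrib_left)
  moreover have "(z i)\<^sup>2 - 2 * (\<bar>z i\<bar> * \<bar>b\<bar>) \<le> (z i + b)\<^sup>2"
    using abs_ge_minus_self[of "z i * b"] by (simp add: power2_eq_square algebra_simps abs_mult)
  ultimately have "(z i)\<^sup>2 - 2 * t * \<bar>z i\<bar> * (\<Sum>j\<in>UNIV. \<bar>z j\<bar>) \<le> (c \<bullet> x)\<^sup>2"
    unfolding cx by (simp add: mult_ac)
  then show ?thesis by (simp add: z_def)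
qed

lemma sum_inner_squares_ge_of_card_balls:
  fixes c :: "'k \<Rightarrow> real^'n::finite" and a t :: real
  assumes "finite K" and "t < 1/2" and "0 \<le> a" and "\<And>j. w j \<noteq> 0"
    and card: "\<And>i. a \<le> card {k\<in>K. c k \<in> weighted_axis_ball w t i}"
  shows "a * ((\<Sum>j\<in>UNIV. (x $ j / w j)\<^sup>2) - 2 * t * (\<Sum>j\<in>UNIV. \<bar>x $ j / w j\<bar>)\<^sup>2)
           \<le> (\<Sum>k\<in>K. (c k \<bullet> x)\<^sup>2)"
proof -
  define L where "L = (\<Sum>j\<in>UNIV. \<bar>x $ j / w j\<bar>)"
  define g where "g i = (x $ i / w i)\<^sup>2 - 2 * t * \<bar>x $ i / w i\<bar> * L" for i
  define S where "S i = {k\<in>K. c k \<in> weighted_axis_ball w t i}" for i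
  have "a * g i \<le> (\<Sum>k\<in>S i. (c k \<bullet> x)\<^sup>2)" for i
  proof -
    have "a * g i \<le> a * max 0 (g i)"
      using \<open>0 \<le> a\<close> by (intro mult_left_mono) auto
    also have "\<dots> \<le> card (S i) * max 0 (g i)"
      using card[of i] unfolding S_def by (intro mult_right_mono) auto
    also have "\<dots> = (\<Sum>k\<in>S i. max 0 (g i))" by simp
    also have "\<dots> \<le> (\<Sum>k\<in>S i. (c k \<bullet> x)\<^sup>2)"
      using inner_square_ge_near_axis[OF _ assms(4)]
      by (intro sum_mono) (auto simp: S_def g_def L_def)
    finally show ?thesis .
  qed
  then have "a * (\<Sum>i\<in>UNIV. g i) \<le> (\<Sum>i\<in>UNIV. \<Sum>k\<in>S i. (c k \<bullet> x)\<^sup>2)"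
    by (simp add: sum_distrib_left sum_mono)
  also have "\<dots> = (\<Sum>k\<in>(\<Union>i. S i). (c k \<bullet> x)\<^sup>2)"
    using weighted_axis_balls_disjoint[OF assms(2)] assms(1)
    by (intro sum.UNION_disjoint[symmetric]) (auto simp: S_def)
  also have "\<dots> \<le> (\<Sum>k\<in>K. (c k \<bullet> x)\<^sup>2)"
    using assms(1) by (intro sum_mono2) (auto simp: S_def)
  also have "(\<Sum>i\<in>UNIV. g i) = (\<Sum>j\<in>UNIV. (x $ j / w j)\<^sup>2) - (2 * t * L) * L"
    unfolding g_def sum_subtractf by (simp add: L_def sum_distrib_left mult_ac)
  finally show ?thesis by (simp add: L_def power2_eq_square mult_ac)
qed

lemma sum_inner_squares_ge_weighted_sum_squares:
  fixes c :: "'k \<Rightarrow> real^'n::finite" and t \<delta> :: real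
  assumes "finite K" and "0 \<le> t" and "t < 1/2" and "0 \<le> \<delta>" and "\<And>j. w j \<noteq> 0"
    and card: "\<And>i. card K * (5/2 * CARD('n) * t + \<delta>) \<le> card {k\<in>K. c k \<in> weighted_axis_ball w t i}"
  shows "card K * \<delta> * (\<Sum>j\<in>UNIV. (x $ j / w j)\<^sup>2) \<le> (\<Sum>k\<in>K. (c k \<bullet> x)\<^sup>2)"
proof (cases "K = {}")
  case False
  define n where "n = real CARD('n)"
  define \<alpha> where "\<alpha> = 5/2 * n * t + \<delta>"
  define Z where "Z = (\<Sum>j\<in>UNIV. (x $ j / w j)\<^sup>2)"
  define L where "L = (\<Sum>j\<in>UNIV. \<bar>x $ j / w j\<bar>)"
  have "n \<ge> 1" "\<alpha> \<ge> 0" "Z \<ge> 0"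
    using assms(2,4) by (auto simp: n_def \<alpha>_def Z_def sum_nonneg)
  have "n * (card K * \<alpha>) \<le> (\<Sum>i\<in>UNIV. real (card {k\<in>K. c k \<in> weighted_axis_ball w t i}))"
    using sum_mono[OF card] by (simp add: n_def \<alpha>_def)
  also have "\<dots> \<le> card K"
    using sum_card_weighted_axis_balls_le[OF assms(3,1)] by (simp flip: of_nat_sum)
  finally have "(n * \<alpha>) * card K \<le> 1 * card K"
    by (simp add: mult_ac)
  then have "n * \<alpha> \<le> 1"
    using False assms(1) by (simp add: card_gt_0_iff)
  then have "\<alpha> \<le> 1"
    using mult_right_mono[OF \<open>n \<ge> 1\<close> \<open>\<alpha> \<ge> 0\<close>] by linarith
  have "\<alpha> * (1 - 2 * t * n) - \<delta> = n * t * (5/2 - 2 * \<alpha>)"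
    by (simp add: \<alpha>_def field_simps)
  also have "\<dots> \<ge> 0"
    using \<open>n \<ge> 1\<close> \<open>\<alpha> \<le> 1\<close> assms(2) by (intro mult_nonneg_nonneg) auto
  finally have "\<delta> \<le> \<alpha> * (1 - 2 * t * n)" by simp
  then have "card K * \<delta> * Z \<le> card K * (\<alpha> * (1 - 2 * t * n)) * Z"
    using \<open>Z \<ge> 0\<close> by (intro mult_right_mono mult_left_mono) auto
  also have "\<dots> = card K * \<alpha> * (Z - 2 * t * (n * Z))"
    by (simp add: algebra_simps)
  also have "\<dots> \<le> card K * \<alpha> * (Z - 2 * t * L\<^sup>2)"
  proof -
    have "L\<^sup>2 \<le> n * Z"
      using sum_squared_le_sum_of_squares[of "\<lambda>j. \<bar>x $ j / w j\<bar>" UNIV]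
      by (simp add: L_def Z_def n_def mult.commute power_divide)
    then have "2 * t * L\<^sup>2 \<le> 2 * t * (n * Z)"
      using assms(2) by (intro mult_left_mono) auto
    then show ?thesis
      using \<open>\<alpha> \<ge> 0\<close> by (intro mult_left_mono) auto
  qed
  also have "\<dots> \<le> (\<Sum>k\<in>K. (c k \<bullet> x)\<^sup>2)"
    unfolding Z_def L_def using \<open>\<alpha> \<ge> 0\<close> card
    by (intro sum_inner_squares_ge_of_card_balls assms(1,3,5)) (simp_all add: \<alpha>_def n_def)
  finally show ?thesis by (simp add: Z_def)
qed simp

lemma norm_square_div_Max_le_weighted_sum:
  fixes x :: "real^'n::finite"
  assumes "\<And>j. w j \<noteq> 0"
  shows "(norm x)\<^sup>2 / (MAX j\<in>UNIV. (w j)\<^sup>2) \<le> (\<Sum>j\<in>UNIV. (x $ j / w j)\<^sup>2)"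
proof -
  define W where "W = (MAX j\<in>UNIV. (w j)\<^sup>2)"
  have W: "(w j)\<^sup>2 \<le> W" for j
    unfolding W_def by (rule Max_ge) auto
  then have "W > 0"
    using assms by (meson less_le_trans zero_less_power2)
  have "(norm x)\<^sup>2 = (\<Sum>j\<in>UNIV. (w j)\<^sup>2 * (x $ j / w j)\<^sup>2)"
    unfolding power2_norm_eq_inner inner_vec_def
    using assms by (intro sum.cong) (auto simp: power2_eq_square)
  also have "\<dots> \<le> (\<Sum>j\<in>UNIV. W * (x $ j / w j)\<^sup>2)"
    using W by (intro sum_mono mult_right_mono) auto
  finally show ?thesis
    using \<open>W > 0\<close> by (simp add: W_def divide_le_eq sum_distrib_left mult.commute)
qed

lemma lambda_min_gram_matrix_ge:
  fixes c :: "'k \<Rightarrow> real^'n::finite" and t \<delta> :: real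
  assumes "finite K" and "0 \<le> t" and "t < 1/2" and "0 \<le> \<delta>" and w: "\<And>j. w j \<noteq> 0"
    and "\<And>i. card K * (5/2 * CARD('n) * t + \<delta>) \<le> card {k\<in>K. c k \<in> weighted_axis_ball w t i}"
  shows "card K * \<delta> / (MAX j\<in>UNIV. (w j)\<^sup>2) \<le> lambda_min (\<chi> i j. \<Sum>k\<in>K. c k $ i * c k $ j)"
proof (rule lambda_min_ge_Rayleigh)
  show "transpose (\<chi> i j. \<Sum>k\<in>K. c k $ i * c k $ j) = (\<chi> i j. \<Sum>k\<in>K. c k $ i * c k $ j)"
    by (simp add: transpose_def vec_eq_iff mult.commute)
  fix x :: "real^'n"
  have "card K * \<delta> / (MAX j\<in>UNIV. (w j)\<^sup>2) * (norm x)\<^sup>2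
      = card K * \<delta> * ((norm x)\<^sup>2 / (MAX j\<in>UNIV. (w j)\<^sup>2))"
    by simp
  also have "\<dots> \<le> card K * \<delta> * (\<Sum>j\<in>UNIV. (x $ j / w j)\<^sup>2)"
    using norm_square_div_Max_le_weighted_sum[OF w] assms(4) by (intro mult_left_mono) auto
  also have "\<dots> \<le> (\<Sum>k\<in>K. (c k \<bullet> x)\<^sup>2)"
    using assms by (rule sum_inner_squares_ge_weighted_sum_squares)
  finally show "card K * \<delta> / (MAX j\<in>UNIV. (w j)\<^sup>2) * (norm x)\<^sup>2
      \<le> x \<bullet> ((\<chi> i j. \<Sum>k\<in>K. c k $ i * c k $ j) *v x)"
    by (simp only: inner_gram_matrix)
qed

theorem lemma4p8:
  fixes \<Delta> :: "(real^'d) set set"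
    and v :: "'n::finite \<Rightarrow> real^'d"
    and u :: "nat \<Rightarrow> real^'d"
    and t \<delta> :: real and N :: nat
  assumes "simplicial_fan \<Delta>" and "polytopal_fan \<Delta>"
    and "ray_generators \<Delta> v"
    and "\<And>k. k \<ge> 1 \<Longrightarrow> norm (u k) = 1"
    and "0 \<le> t" and "t < 1/2" and "\<delta> > 0"
    and "\<And>m i. m \<ge> N \<Longrightarrow>
           real (card ({u k | k. 1 \<le> k \<and> k \<le> m} \<inter> C_set \<Delta> v t i))
             \<ge> real m * (5/2 * real CARD('n) * t + \<delta>)"
  shows "\<And>m. m \<ge> N \<Longrightarrow>
           lambda_min (AtA_U \<Delta> v u m) \<ge> real m * \<delta> / (MAX i\<in>UNIV. (norm (v i))\<^sup>2)"
proof -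
  fix m assume "m \<ge> N"
  define c where "c k = fan_coords \<Delta> v (u k)" for k
  define w where "w = (\<lambda>j. norm (v j))"
  define S where "S i = {k\<in>{1..m}. c k \<in> weighted_axis_ball w t i}" for i
  have "card {1..m} * (5/2 * CARD('n) * t + \<delta>) \<le> card (S i)" for i
  proof -
    have "{u k | k. 1 \<le> k \<and> k \<le> m} \<inter> C_set \<Delta> v t i = u ` S i"
      by (auto simp: C_set_eq_fan_coords_in_ball S_def c_def w_def)
    then show ?thesis
      using assms(8)[OF \<open>m \<ge> N\<close>, of i] card_image_le[of "S i" u] by (simp add: S_def)
  qed
  moreover have "w j \<noteq> 0" for j
    using assms(3) by (simp add: w_def ray_generators_def)
  ultimately have "card {1..m} * \<delta> / (MAX j\<in>UNIV. (w j)\<^sup>2)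
      \<le> lambda_min (\<chi> i j. \<Sum>k\<in>{1..m}. c k $ i * c k $ j)"
    using assms(5-7) unfolding S_def by (intro lambda_min_gram_matrix_ge) auto
  then show "lambda_min (AtA_U \<Delta> v u m) \<ge> real m * \<delta> / (MAX i\<in>UNIV. (norm (v i))\<^sup>2)"
    by (simp add: AtA_U_def c_def w_def)
qed

end
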